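(* Let $\Omega$ be a magnetic billiard domain (with Larmor radius $r$) having the $\delta$-Gutkin property, $\delta\in(0,\pi)$, and let $\Gamma\subset\Omega_r$ be the curve consisting of the Larmor centers of all Larmor arcs making angle $\delta$ with the boundary $\gamma$. For each $s$ let $P_\pm(s)=\gamma(s)+rR_{\pi/2\pm\delta}\dot\gamma(s)$ (these are the Larmor centers of an arc exiting $\Omega$ at $\gamma(s)$ with angle $\delta$ and of its reflected arc, so $P_+(s)=\mathcal{M}(P_-(s))$ and both lie on $\Gamma$). Then $\Gamma$ is a Zindler curve: the segment $[P_-(s),P_+(s)]$ inscribed in $\Gamma$ has constant length $L=2r\sin\delta$, and as $s$ varies the velocity of its midpoint $M(s)$ is parallel to the segment. Moreover, the midpoints $M(s)$ form a curve $\tilde\Gamma$ which is parallel to $\gamma$ at distance $r\cos\delta$.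
   Context: $\Omega\subset\mathbb{R}^2$ is a bounded domain with boundary $\gamma$ a smooth simple closed curve parametrized counterclockwise by arc length $s$; $R_\epsilon$ denotes counterclockwise rotation by angle $\epsilon$, $J=R_{\pi/2}$, $n=J\dot\gamma$, and $\gamma_t=\gamma+t\,n$. Magnetic billiard with field magnitude $\beta$, Larmor radius $r=1/\beta$: a particle moves in $\Omega$ with unit speed along counterclockwise circles of radius $r$ (Larmor arcs) and is reflected at $\gamma$ by the law of geometric optics. $\Omega_r$ is the annulus between $\gamma_{+r}$ and $\gamma_{-r}$, the set of Larmor centers of circles meeting $\gamma$. The magnetic billiard map $\mathcal{M}:\Omega_r\to\Omega_r$ sends the Larmor center $Q+rR_{\pi/2-\epsilon}\dot\gamma(Q)$ of an arc exiting $\Omega$ at $Q\in\gamma$ with angle $\epsilon\in(0,\pi)$ to the Larmor center $Q+rR_{\pi/2+\epsilon}\dot\gamma(Q)$ of the reflected arc. The billiard has the $\delta$-Gutkin property if every Larmor arc entering $\Omega$ making angle $\delta$ with $\gamma$ exits $\Omega$ making angle $\delta$ with $\gamma$; equivalently, $\Gamma$ is invariant under $\mathcal{M}$. *)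

theory Defs
  imports "HOL-Complex_Analysis.Complex_Analysis"
begin

text \<open>The plane R^2 is identified with the complex numbers; the counterclockwise
rotation R_eps is multiplication by cis eps, and J = R_{pi/2} is multiplication by i.\<close>

definition smooth_curve :: "(real \<Rightarrow> complex) \<Rightarrow> bool" where
  "smooth_curve g \<longleftrightarrow>
     (\<exists>D :: nat \<Rightarrow> real \<Rightarrow> complex. D 0 = g \<and>
        (\<forall>k t. (D k has_vector_derivative D (Suc k) t) (at t)))"

definition billiard_boundary :: "(real \<Rightarrow> complex) \<Rightarrow> real \<Rightarrow> bool" where
  "billiard_boundary g L \<longleftrightarrow>
     L > 0 \<and> smooth_curve g \<and>
     (\<forall>t. g (t + L) = g t) \<and>
     inj_on g {0..<L} \<and>
     (\<forall>t. norm (vector_derivative g (at t)) = 1) \<and>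
     (\<forall>z \<in> inside (g ` {0..L}). winding_number (\<lambda>u. g (L * u)) z = 1)"

text \<open>Unit tangent and (inner) unit normal n = J gamma'.\<close>
definition tangent :: "(real \<Rightarrow> complex) \<Rightarrow> real \<Rightarrow> complex" where
  "tangent g s = vector_derivative g (at s)"

definition normal :: "(real \<Rightarrow> complex) \<Rightarrow> real \<Rightarrow> complex" where
  "normal g s = \<i> * tangent g s"

definition parallel_curve :: "(real \<Rightarrow> complex) \<Rightarrow> real \<Rightarrow> real \<Rightarrow> complex" where
  "parallel_curve g t s = g s + of_real t * normal g s"

text \<open>Larmor centre of the arc exiting at gamma(s) with angle eps, and of the reflected
arc (i.e. of the arc entering at gamma(s) with angle eps).\<close>
definition exit_centre :: "(real \<Rightarrow> complex) \<Rightarrow> real \<Rightarrow> real \<Rightarrow> real \<Rightarrow> complex" where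
  "exit_centre g r eps s = g s + of_real r * cis (pi/2 - eps) * tangent g s"

definition entry_centre :: "(real \<Rightarrow> complex) \<Rightarrow> real \<Rightarrow> real \<Rightarrow> real \<Rightarrow> complex" where
  "entry_centre g r eps s = g s + of_real r * cis (pi/2 + eps) * tangent g s"

definition larmor_point :: "complex \<Rightarrow> complex \<Rightarrow> real \<Rightarrow> complex" where
  "larmor_point c p \<theta> = c + (p - c) * cis \<theta>"

definition gutkin :: "(real \<Rightarrow> complex) \<Rightarrow> real \<Rightarrow> real \<Rightarrow> bool" where
  "gutkin g r \<delta> \<longleftrightarrow>
     (\<forall>s \<theta>1. let c = entry_centre g r \<delta> s in
        (\<theta>1 > 0 \<and> larmor_point c (g s) \<theta>1 \<in> range g \<and>
         (\<forall>\<theta> \<in> {0<..<\<theta>1}. larmor_point c (g s) \<theta> \<notin> range g))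
        \<longrightarrow> (\<exists>s1. g s1 = larmor_point c (g s) \<theta>1 \<and> c = exit_centre g r \<delta> s1))"

text \<open>Gamma: Larmor centres of all arcs making angle delta with the boundary
(taken as the centres of arcs exiting with angle delta).\<close>
definition Gamma :: "(real \<Rightarrow> complex) \<Rightarrow> real \<Rightarrow> real \<Rightarrow> complex set" where
  "Gamma g r \<delta> = range (exit_centre g r \<delta>)"

end

theory Submission
  imports Defs
begin

text \<open>
  With T = \<gamma>'(s), the two centres are \<gamma>(s) + r R(\<pi>/2 \<plusminus> \<delta>) T: their difference is
  -2r sin \<delta> T and their midpoint is \<gamma>(s) + r cos \<delta> n(s), a parallel curve of \<gamma>.
  Since |\<gamma>'| = 1 we have \<gamma>'' = \<kappa> n, so a parallel curve \<gamma> + c n moves with velocity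
  (1 - c \<kappa>) T, parallel to the chord. The only non-algebraic point is that P+(s) lies on
  \<Gamma>: the Larmor arc entering at \<gamma>(s) with angle \<delta> leaves \<gamma> transversally and is back
  on \<gamma> after a full turn, so by closedness there is a first return, where the Gutkin
  property makes its centre the centre of an exiting arc.
\<close>

lemma periodic_shift_nat:
  fixes g :: "real \<Rightarrow> 'a" and L :: real
  assumes "\<And>t. g (t + L) = g t"
  shows "g (t + real n * L) = g t"
proof (induction n arbitrary: t)
  case (Suc n)
  have "g (t + real (Suc n) * L) = g (t + real n * L + L)" by (simp add: algebra_simps)
  with Suc assms show ?case by simp
qed simp

lemma periodic_shift_int:
  fixes g :: "real \<Rightarrow> 'a" and L :: real
  assumes "\<And>t. g (t + L) = g t"
  shows "g (t + of_int n * L) = g t"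
proof (cases "n \<ge> 0")
  case True
  then show ?thesis using periodic_shift_nat[of g L, OF assms, of t "nat n"] by simp
next
  case False
  then have "g (t + of_int n * L + real (nat (- n)) * L) = g t" by simp
  then show ?thesis using periodic_shift_nat[of g L, OF assms, of "t + of_int n * L" "nat (- n)"] by simp
qed

lemma periodic_range_eq_image:
  fixes g :: "real \<Rightarrow> 'a" and L :: real
  assumes "\<And>t. g (t + L) = g t" and "L > 0"
  shows "range g = g ` {a..a + L}"
proof -
  have "g t \<in> g ` {a..a + L}" for t
  proof
    define n where "n = \<lfloor>(t - a) / L\<rfloor>"
    have "of_int n * L \<le> t - a" "t - a < of_int n * L + L"
      unfolding n_def using assms(2) floor_divide_lower floor_divide_upper[of L "t - a"]
      by (auto simp: distrib_right)
    then show "t + of_int (- n) * L \<in> {a..a + L}" by simp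
    show "g t = g (t + of_int (- n) * L)" using periodic_shift_int[of g L, OF assms(1), of t "- n"] by simp
  qed
  then show ?thesis by auto
qed

lemma periodic_inj_on_eq_imp_eq:
  fixes g :: "real \<Rightarrow> 'a" and L :: real
  assumes "\<And>t. g (t + L) = g t" and "L > 0" and "inj_on g {0..<L}"
    and "g t = g s" and "\<bar>t - s\<bar> < L"
  shows "t = s"
proof -
  define reduce where "reduce x = x - of_int \<lfloor>x / L\<rfloor> * L" for x
  have reduce_in: "reduce x \<in> {0..<L}" for x
    unfolding reduce_def using assms(2) floor_divide_lower floor_divide_upper[of L x]
    by (auto simp: distrib_right)
  have "g (reduce x) = g x" for x
    unfolding reduce_def using periodic_shift_int[of g L, OF assms(1), of x "- \<lfloor>x / L\<rfloor>"] by simp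
  then have "reduce t = reduce s"
    using inj_onD[OF assms(3) _ reduce_in reduce_in] assms(4) by metis
  then have shift: "t - s = of_int (\<lfloor>t / L\<rfloor> - \<lfloor>s / L\<rfloor>) * L"
    unfolding reduce_def by (simp add: algebra_simps)
  with assms(2,5) have "\<bar>of_int (\<lfloor>t / L\<rfloor> - \<lfloor>s / L\<rfloor>)\<bar> * L < 1 * L"
    by (simp add: abs_mult)
  then have "\<lfloor>t / L\<rfloor> - \<lfloor>s / L\<rfloor> = 0"
    using assms(2) mult_less_cancel_right_pos by fastforce
  with shift show ?thesis by simp
qed

lemma sin_bounded_below_on_subinterval:
  assumes "0 < a" and "b < pi"
  obtains m where "m > 0" and "\<And>x. x \<in> {a..b} \<Longrightarrow> m \<le> sin x"
proof (cases "a \<le> b")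
  case True
  then have "\<exists>x0\<in>{a..b}. \<forall>x\<in>{a..b}. sin x0 \<le> sin x"
    by (intro continuous_attains_inf) (auto intro: continuous_intros)
  then obtain x0 where "x0 \<in> {a..b}" and "\<forall>x\<in>{a..b}. sin x0 \<le> sin x" by blast
  moreover have "sin x0 > 0" using assms \<open>x0 \<in> {a..b}\<close> by (intro sin_gt_zero) auto
  ultimately show ?thesis using that[of "sin x0"] by blast
qed (use that[of 1] in auto)

text \<open>Near s the curve stays close to its tangent line, while such chords point
  strictly into one side of it.\<close>

lemma has_vector_derivative_avoids_cone:
  fixes g :: "real \<Rightarrow> complex"
  assumes der: "(g has_vector_derivative T) (at s)" and "T \<noteq> 0" and "0 < a" and "b < pi"
  obtains \<eta> where "\<eta> > 0"
    and "\<And>t \<rho> \<phi>. \<bar>t - s\<bar> < \<eta> \<Longrightarrow> 0 < \<rho> \<Longrightarrow> \<phi> \<in> {a..b} \<Longrightarrow>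
           g t - g s \<noteq> of_real \<rho> * cis \<phi> * T"
proof -
  obtain m where m: "m > 0" "\<And>\<phi>. \<phi> \<in> {a..b} \<Longrightarrow> m \<le> sin \<phi>"
    using sin_bounded_below_on_subinterval[OF assms(3,4)] by blast
  define k where "k = m / 4"
  have "(g has_derivative (\<lambda>h. h *\<^sub>R T)) (at s)"
    using der by (simp add: has_vector_derivative_def)
  moreover have "k * norm T > 0" using m \<open>T \<noteq> 0\<close> by (simp add: k_def)
  ultimately obtain \<eta> where "\<eta> > 0" and \<eta>:
    "\<And>t. norm (t - s) < \<eta> \<Longrightarrow> norm (g t - g s - (t - s) *\<^sub>R T) \<le> k * norm T * norm (t - s)"
    unfolding has_derivative_at_alt by blast
  moreover have "g t - g s \<noteq> of_real \<rho> * cis \<phi> * T"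
    if t: "\<bar>t - s\<bar> < \<eta>" and "0 < \<rho>" and \<phi>: "\<phi> \<in> {a..b}" for t \<rho> \<phi>
  proof
    assume chord: "g t - g s = of_real \<rho> * cis \<phi> * T"
    define u where "u = of_real \<rho> * cis \<phi>"
    define d where "d = \<bar>t - s\<bar>"
    have "u - of_real (t - s) = (g t - g s - (t - s) *\<^sub>R T) / T"
      unfolding u_def chord using \<open>T \<noteq> 0\<close> by (simp add: scaleR_conv_of_real field_simps)
    then have "norm (u - of_real (t - s)) = norm (g t - g s - (t - s) *\<^sub>R T) / norm T"
      by (simp add: norm_divide)
    also have "\<dots> \<le> k * d"
      using \<eta>[of t] t \<open>T \<noteq> 0\<close> by (simp add: d_def divide_le_eq mult.commute mult.left_commute)
    finally have near: "norm (u - of_real (t - s)) \<le> k * d" .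
    have "k \<le> 1 / 4" using order_trans[OF m(2)[OF \<phi>] sin_le_one] by (simp add: k_def)
    have "d = norm (u - (u - of_real (t - s)))" by (simp add: d_def del: of_real_diff)
    also have "\<dots> \<le> norm u + norm (u - of_real (t - s))" by (rule norm_triangle_ineq4)
    finally have "d \<le> \<rho> + k * d" using near \<open>0 < \<rho>\<close> by (simp add: u_def norm_mult)
    moreover have "k * d \<le> 1 / 4 * d" using \<open>k \<le> 1 / 4\<close> by (rule mult_right_mono) (simp add: d_def)
    ultimately have d_le: "d \<le> 4 / 3 * \<rho>" by linarith
    have "m * \<rho> \<le> \<rho> * sin \<phi>" using m(2)[OF \<phi>] \<open>0 < \<rho>\<close> by (simp add: mult.commute)
    also have "\<rho> * sin \<phi> = Im (u - of_real (t - s))" by (simp add: u_def)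
    also have "\<dots> \<le> k * d" using near abs_Im_le_cmod[of "u - of_real (t - s)"] by linarith
    also have "\<dots> \<le> k * (4 / 3 * \<rho>)" using d_le m(1) by (intro mult_left_mono) (simp_all add: k_def)
    finally have "m * \<rho> \<le> m * \<rho> / 3" by (simp add: k_def)
    then show False using m(1) \<open>0 < \<rho>\<close> by (simp add: field_simps)
  qed
  ultimately show ?thesis using that by blast
qed

lemma cis_minus_1_half_angle: "cis \<theta> - 1 = 2 * \<i> * of_real (sin (\<theta> / 2)) * cis (\<theta> / 2)"
proof -
  have "cos \<theta> = 1 - 2 * sin (\<theta> / 2) ^ 2" using cos_double_sin[of "\<theta> / 2"] by simp
  moreover have "sin \<theta> = 2 * sin (\<theta> / 2) * cos (\<theta> / 2)" using sin_double[of "\<theta> / 2"] by simp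
  ultimately show ?thesis by (simp add: complex_eq_iff power2_eq_square algebra_simps)
qed

lemma cis_right_angle_plus_minus:
  shows "cis (pi / 2 - \<delta>) = \<i> * cis (- \<delta>)"
    and "cis (pi / 2 + \<delta>) = \<i> * cis \<delta>"
   by (simp add: complex_eq_iff cos_diff sin_diff) (simp add: complex_eq_iff cos_add sin_add)

lemma larmor_point_chord:
  "larmor_point (p + of_real r * cis (pi / 2 + \<delta>) * T) p \<theta> - p
     = of_real (2 * r * sin (\<theta> / 2)) * cis (\<delta> + \<theta> / 2) * T"
proof -
  have "larmor_point (p + of_real r * cis (pi / 2 + \<delta>) * T) p \<theta> - p
      = - (of_real r * \<i> * cis \<delta> * T) * (cis \<theta> - 1)"
    unfolding larmor_point_def cis_right_angle_plus_minus(2) by (simp add: algebra_simps)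
  also have "\<dots> = of_real (2 * r * sin (\<theta> / 2)) * (cis \<delta> * cis (\<theta> / 2)) * T"
    unfolding cis_minus_1_half_angle by (simp add: algebra_simps)
  finally show ?thesis by (simp add: cis_mult)
qed

lemma first_positive_hit:
  fixes q :: "real \<Rightarrow> 'a::topological_space"
  assumes "closed K" and "continuous_on UNIV q" and "\<forall>\<^sub>F \<theta> in at_right 0. q \<theta> \<notin> K"
    and "\<theta>0 > 0" and "q \<theta>0 \<in> K"
  shows "\<exists>\<theta>1>0. q \<theta>1 \<in> K \<and> (\<forall>\<theta>\<in>{0<..<\<theta>1}. q \<theta> \<notin> K)"
proof -
  obtain \<epsilon> where "\<epsilon> > 0" and avoid: "\<And>\<theta>. 0 < \<theta> \<Longrightarrow> \<theta> < \<epsilon> \<Longrightarrow> q \<theta> \<notin> K"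
    using assms(3) by (auto simp: eventually_at_right_field)
  define S where "S = {\<epsilon>..} \<inter> q -` K"
  have "\<theta>0 \<in> S" using avoid[of \<theta>0] assms(4,5) by (force simp: S_def)
  moreover have "closed S"
    unfolding S_def using assms(1,2) by (intro closed_Int closed_atLeast closed_vimage)
  moreover have "bdd_below S" unfolding S_def by (rule bdd_belowI[of _ \<epsilon>]) auto
  ultimately have "Inf S \<in> S" using closed_contains_Inf by blast
  show ?thesis
  proof (intro exI conjI ballI)
    show "Inf S > 0" and "q (Inf S) \<in> K" using \<open>Inf S \<in> S\<close> \<open>\<epsilon> > 0\<close> by (auto simp: S_def)
    fix \<theta> assume "\<theta> \<in> {0<..<Inf S}"
    then show "q \<theta> \<notin> K"
      using avoid[of \<theta>] cInf_lower[OF _ \<open>bdd_below S\<close>, of \<theta>] by (force simp: S_def)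
  qed
qed

lemma larmor_arc_leaves_curve:
  fixes g :: "real \<Rightarrow> complex" and L r \<delta> :: real
  assumes per: "\<And>t. g (t + L) = g t" and "L > 0" and inj: "inj_on g {0..<L}"
    and cont: "continuous_on UNIV g" and der: "(g has_vector_derivative T) (at s)" and "T \<noteq> 0"
    and "r > 0" and "0 < \<delta>" and "\<delta> < pi"
  shows "\<forall>\<^sub>F \<theta> in at_right 0.
           larmor_point (g s + of_real r * cis (pi / 2 + \<delta>) * T) (g s) \<theta> \<notin> range g"
proof -
  define q where "q = larmor_point (g s + of_real r * cis (pi / 2 + \<delta>) * T) (g s)"
  have "(pi + \<delta>) / 2 < pi" using \<open>\<delta> < pi\<close> by simp
  then obtain \<eta> where "\<eta> > 0" and cone: "\<And>t \<rho> \<phi>. \<bar>t - s\<bar> < \<eta> \<Longrightarrow> 0 < \<rho> \<Longrightarrow>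
      \<phi> \<in> {\<delta>..(pi + \<delta>) / 2} \<Longrightarrow> g t - g s \<noteq> of_real \<rho> * cis \<phi> * T"
    by (rule has_vector_derivative_avoids_cone[OF der \<open>T \<noteq> 0\<close> \<open>0 < \<delta>\<close>]) (rule that)
  \<comment> \<open>Points of the curve near g s are excluded by the cone, the others by compactness.\<close>
  define A where "A = g ` ({s - L / 2..s + L / 2} - ball s \<eta>)"
  have "closed A" unfolding A_def
    by (intro compact_imp_closed compact_continuous_image continuous_on_subset[OF cont] compact_diff) auto
  have "g s \<notin> A"
  proof
    assume "g s \<in> A"
    then obtain t where t: "t \<in> {s - L / 2..s + L / 2} - ball s \<eta>" and "g t = g s"
      unfolding A_def by (metis imageE)
    moreover have "\<bar>t - s\<bar> < L" and "t \<noteq> s" using t \<open>\<eta> > 0\<close> \<open>L > 0\<close> by auto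
    ultimately show False using periodic_inj_on_eq_imp_eq[of g L, OF per \<open>L > 0\<close> inj] by blast
  qed
  have "(q \<longlongrightarrow> g s) (at_right 0)"
  proof -
    have "continuous_on UNIV q" unfolding q_def larmor_point_def by (intro continuous_intros)
    then have "(q \<longlongrightarrow> q 0) (at 0)" by (simp add: continuous_on_eq_continuous_at isCont_def)
    then have "(q \<longlongrightarrow> q 0) (at_right 0)" by (rule tendsto_mono[OF at_le, rotated]) simp
    then show ?thesis by (simp add: q_def larmor_point_def)
  qed
  then have far: "\<forall>\<^sub>F \<theta> in at_right 0. q \<theta> \<in> - A"
    using \<open>closed A\<close> \<open>g s \<notin> A\<close> by (intro topological_tendstoD) auto
  have "q \<theta> \<notin> g ` ball s \<eta>" if "0 < \<theta>" and "\<theta> < pi - \<delta>" for \<theta>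
  proof
    assume "q \<theta> \<in> g ` ball s \<eta>"
    then obtain t where "t \<in> ball s \<eta>" and "g t = q \<theta>" by (metis imageE)
    then have "\<bar>t - s\<bar> < \<eta>" by (simp add: dist_real_def abs_minus_commute)
    moreover have "2 * r * sin (\<theta> / 2) > 0" using that \<open>r > 0\<close> \<open>0 < \<delta>\<close> by (simp add: sin_gt_zero)
    moreover have "\<delta> + \<theta> / 2 \<in> {\<delta>..(pi + \<delta>) / 2}" using that by auto
    ultimately have "g t - g s \<noteq> of_real (2 * r * sin (\<theta> / 2)) * cis (\<delta> + \<theta> / 2) * T"
      by (rule cone)
    moreover have "q \<theta> - g s = of_real (2 * r * sin (\<theta> / 2)) * cis (\<delta> + \<theta> / 2) * T"
      unfolding q_def by (rule larmor_point_chord)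
    ultimately show False using \<open>g t = q \<theta>\<close> by simp
  qed
  then have near: "\<forall>\<^sub>F \<theta> in at_right 0. q \<theta> \<notin> g ` ball s \<eta>"
    unfolding eventually_at_right_field using \<open>\<delta> < pi\<close> by (intro exI[of _ "pi - \<delta>"]) auto
  have cover: "range g \<subseteq> A \<union> g ` ball s \<eta>"
    using periodic_range_eq_image[of g L, OF per \<open>L > 0\<close>, of "s - L / 2"] by (auto simp: A_def)
  have "\<forall>\<^sub>F \<theta> in at_right 0. q \<theta> \<notin> range g"
    using eventually_conj[OF far near] by (rule eventually_mono) (use cover in blast)
  then show ?thesis by (simp add: q_def)
qed

lemma smooth_curve_tangent:
  assumes "smooth_curve g"
  shows smooth_curve_has_tangent: "(g has_vector_derivative tangent g t) (at t)"
    and smooth_curve_tangent_smooth: "smooth_curve (tangent g)"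
proof -
  obtain D where D0: "D 0 = g" and D: "\<And>k t. (D k has_vector_derivative D (Suc k) t) (at t)"
    using assms unfolding smooth_curve_def by blast
  have tangent: "tangent g = D 1"
    using D[of 0] D0 by (auto simp: tangent_def fun_eq_iff intro: vector_derivative_at)
  show "(g has_vector_derivative tangent g t) (at t)" using D[of 0 t] D0 tangent by simp
  show "smooth_curve (tangent g)"
    unfolding smooth_curve_def tangent by (intro exI[of _ "\<lambda>k. D (Suc k)"]) (simp add: D)
qed

lemma smooth_curve_continuous: "smooth_curve g \<Longrightarrow> continuous_on UNIV g"
  using smooth_curve_has_tangent
  by (intro continuous_at_imp_continuous_on ballI) (blast intro: has_vector_derivative_continuous)

lemma unit_curve_derivative_orthogonal:
  fixes f :: "real \<Rightarrow> complex"
  assumes unit: "\<And>t. norm (f t) = 1" and der: "(f has_vector_derivative b) (at s)"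
  obtains \<kappa> :: real where "b = \<i> * of_real \<kappa> * f s"
proof -
  have "((\<lambda>t. f t * cnj (f t)) has_vector_derivative f s * cnj b + b * cnj (f s)) (at s)"
    using der by (auto intro!: derivative_eq_intros)
  moreover have "(\<lambda>t. f t * cnj (f t)) = (\<lambda>t. 1)"
    using unit by (simp add: fun_eq_iff complex_norm_square[symmetric])
  ultimately have "f s * cnj b + b * cnj (f s) = 0"
    using vector_derivative_unique_at has_vector_derivative_const by metis
  then have "b * cnj (f s) = \<i> * of_real (Im (b * cnj (f s)))" by (simp add: complex_eq_iff)
  moreover have "cnj (f s) * f s = 1"
    using unit[of s] by (simp add: complex_norm_square[symmetric] mult.commute)
  ultimately have "b = \<i> * of_real (Im (b * cnj (f s))) * f s"
    by (metis mult.assoc mult_1_right)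
  then show ?thesis by (rule that)
qed

lemma parallel_curve_tangential_velocity:
  assumes "smooth_curve g" and unit: "\<And>t. norm (tangent g t) = 1"
  obtains k :: real where "(parallel_curve g c has_vector_derivative of_real k * tangent g s) (at s)"
proof -
  have tangent_der: "(tangent g has_vector_derivative tangent (tangent g) s) (at s)"
    using smooth_curve_has_tangent[OF smooth_curve_tangent_smooth[OF assms(1)]] .
  obtain \<kappa> where \<kappa>: "tangent (tangent g) s = \<i> * of_real \<kappa> * tangent g s"
    using unit_curve_derivative_orthogonal[OF unit tangent_der] by blast
  have "(parallel_curve g c has_vector_derivative
           tangent g s + of_real c * (\<i> * tangent (tangent g) s)) (at s)"
    unfolding parallel_curve_def[abs_def] normal_def
    by (intro derivative_intros smooth_curve_has_tangent assms(1) tangent_der)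
  also have "tangent g s + of_real c * (\<i> * tangent (tangent g) s) = of_real (1 - c * \<kappa>) * tangent g s"
    unfolding \<kappa> by (simp add: algebra_simps)
  finally show ?thesis by (rule that)
qed

lemma centres_midpoint_eq_parallel_curve:
  "(exit_centre g r \<delta> s + entry_centre g r \<delta> s) / 2 = parallel_curve g (r * cos \<delta>) s"
proof -
  have "(exit_centre g r \<delta> s + entry_centre g r \<delta> s) / 2
      = g s + of_real r * ((cis (pi / 2 - \<delta>) + cis (pi / 2 + \<delta>)) / 2) * tangent g s"
    unfolding exit_centre_def entry_centre_def by (simp add: algebra_simps add_divide_distrib)
  also have "(cis (pi / 2 - \<delta>) + cis (pi / 2 + \<delta>)) / 2 = \<i> * of_real (cos \<delta>)"
    unfolding cis_right_angle_plus_minus by (simp add: complex_eq_iff)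
  finally show ?thesis by (simp add: parallel_curve_def normal_def algebra_simps)
qed
lemma entry_centre_minus_exit_centre:
  "entry_centre g r \<delta> s - exit_centre g r \<delta> s = - of_real (2 * r * sin \<delta>) * tangent g s"
proof -
  have "entry_centre g r \<delta> s - exit_centre g r \<delta> s
      = of_real r * (cis (pi / 2 + \<delta>) - cis (pi / 2 - \<delta>)) * tangent g s"
    unfolding exit_centre_def entry_centre_def by (simp add: algebra_simps)
  also have "cis (pi / 2 + \<delta>) - cis (pi / 2 - \<delta>) = - 2 * of_real (sin \<delta>)"
    unfolding cis_right_angle_plus_minus by (simp add: complex_eq_iff)
  finally show ?thesis by simp
qed
lemma entry_centre_in_Gamma:
  assumes "billiard_boundary g L" and "r > 0" and "0 < \<delta>" and "\<delta> < pi" and "gutkin g r \<delta>"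
  shows "entry_centre g r \<delta> s \<in> Gamma g r \<delta>"
proof -
  have per: "\<And>t. g (t + L) = g t" and "L > 0" and inj: "inj_on g {0..<L}"
    and smooth: "smooth_curve g" and unit: "norm (tangent g s) = 1"
    using assms(1) by (auto simp: billiard_boundary_def tangent_def)
  then have "tangent g s \<noteq> 0" by auto
  define q where "q = larmor_point (entry_centre g r \<delta> s) (g s)"
  have "closed (range g)"
    unfolding periodic_range_eq_image[of g L, OF per \<open>L > 0\<close>, of 0]
    by (intro compact_imp_closed compact_continuous_image smooth_curve_continuous[OF smooth]
        continuous_on_subset[of UNIV]) auto
  moreover have "continuous_on UNIV q" unfolding q_def larmor_point_def by (intro continuous_intros)
  moreover have "\<forall>\<^sub>F \<theta> in at_right 0. q \<theta> \<notin> range g"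
    unfolding q_def entry_centre_def
    using larmor_arc_leaves_curve[OF per \<open>L > 0\<close> inj smooth_curve_continuous[OF smooth]
        smooth_curve_has_tangent[OF smooth, of s] \<open>tangent g s \<noteq> 0\<close> assms(2-4)] .
  moreover have "q (2 * pi) \<in> range g" by (simp add: q_def larmor_point_def)
  ultimately obtain \<theta>1 where "\<theta>1 > 0" and "q \<theta>1 \<in> range g" and "\<forall>\<theta>\<in>{0<..<\<theta>1}. q \<theta> \<notin> range g"
    using first_positive_hit[of "range g" q "2 * pi"] by auto
  then obtain s1 where "entry_centre g r \<delta> s = exit_centre g r \<delta> s1"
    using assms(5) unfolding gutkin_def Let_def q_def by blast
  then show ?thesis by (simp add: Gamma_def)
qed

theorem theorem3p1:
  fixes g :: "real \<Rightarrow> complex" and L r \<delta> :: real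
  assumes "billiard_boundary g L"
    and "r > 0"
    and "0 < \<delta>" and "\<delta> < pi"
    and "gutkin g r \<delta>"
  defines "Pm \<equiv> exit_centre g r \<delta>"
    and "Pp \<equiv> entry_centre g r \<delta>"
    and "M \<equiv> (\<lambda>s. (exit_centre g r \<delta> s + entry_centre g r \<delta> s) / 2)"
  shows "\<forall>s. Pm s \<in> Gamma g r \<delta> \<and> Pp s \<in> Gamma g r \<delta>
           \<and> dist (Pm s) (Pp s) = 2 * r * sin \<delta>
           \<and> (\<exists>v. (M has_vector_derivative v) (at s)
                  \<and> (\<exists>k::real. v = of_real k * (Pp s - Pm s)))
           \<and> M s = parallel_curve g (r * cos \<delta>) s"
proof (intro allI conjI)
  fix s
  have smooth: "smooth_curve g" and unit: "\<And>t. norm (tangent g t) = 1"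
    using assms(1) by (auto simp: billiard_boundary_def tangent_def)
  have chord: "Pp s - Pm s = - of_real (2 * r * sin \<delta>) * tangent g s"
    unfolding Pp_def Pm_def by (rule entry_centre_minus_exit_centre)
  have "sin \<delta> > 0" using assms(3,4) by (rule sin_gt_zero)
  with assms(2) have "2 * r * sin \<delta> > 0" by simp
  have M: "M = parallel_curve g (r * cos \<delta>)"
    by (simp add: M_def fun_eq_iff centres_midpoint_eq_parallel_curve)
  show "Pm s \<in> Gamma g r \<delta>" by (simp add: Pm_def Gamma_def)
  show "Pp s \<in> Gamma g r \<delta>" unfolding Pp_def using assms(1-5) by (rule entry_centre_in_Gamma)
  show "dist (Pm s) (Pp s) = 2 * r * sin \<delta>"
    using chord unit[of s] \<open>sin \<delta> > 0\<close> assms(2)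
    by (simp add: dist_norm norm_minus_commute[of "Pm s"] norm_mult)
  show "M s = parallel_curve g (r * cos \<delta>) s" by (simp add: M)
  obtain k where "(M has_vector_derivative of_real k * tangent g s) (at s)"
    unfolding M using parallel_curve_tangential_velocity[OF smooth unit] by blast
  moreover have "of_real k * tangent g s = of_real (- k / (2 * r * sin \<delta>)) * (Pp s - Pm s)"
    unfolding chord using \<open>sin \<delta> > 0\<close> assms(2) by simp
  ultimately show "\<exists>v. (M has_vector_derivative v) (at s) \<and> (\<exists>k::real. v = of_real k * (Pp s - Pm s))"
    by blast
qed

end
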